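(* Let $n\ge 0$ be an integer and for $k\in\mathbb{Z}_+$ let $$v_k(t)=c_k\,e^{-\frac{t^{2n+2}}{2n+2}}L^{(-\frac{1}{2n+2})}_{k}\!\left(\frac{t^{2n+2}}{n+1}\right),\qquad w_k(t)=d_k\,e^{-\frac{t^{2n+2}}{2n+2}}\,t\,L^{(\frac{1}{2n+2})}_{k}\!\left(\frac{t^{2n+2}}{n+1}\right),$$ with $c_k,d_k>0$ chosen so that $\|t^nv_k\|_{L^2(\mathbb{R})}=\|t^nw_k\|_{L^2(\mathbb{R})}=1$, and let $E_k=4k(n+1)+2n+1$. There exists a constant $C_1>0$ such that for all $k\in\mathbb{Z}_+$ $$\|v_k'\|_{L^\infty(\mathbb{R})}\le C_1E_k^{\frac72-\frac{1}{4n+4}},\qquad \|w_k'\|_{L^\infty(\mathbb{R})}\le C_1E_k^{\frac72-\frac{1}{4n+4}}.$$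
   Context: $L^{(a)}_k$ denotes the generalized Laguerre polynomial of degree $k$ and parameter $a$. These functions solve $-u''+t^{2(2n+1)}u=E\,t^{2n}u$, with $E=E_k$ for $v_k$ and $E=4k(n+1)+2n+3$ for $w_k$. *)

theory Defs
  imports "HOL-Analysis.Analysis"
begin

definition laguerre :: "nat \<Rightarrow> real \<Rightarrow> real \<Rightarrow> real" where
  "laguerre k a x = (\<Sum>i\<le>k. (-1)^i * ((real k + a) gchoose (k - i)) / fact i * x ^ i)"

definition v_raw :: "nat \<Rightarrow> nat \<Rightarrow> real \<Rightarrow> real" where
  "v_raw n k t = exp (- (t ^ (2*n+2)) / (2 * real n + 2))
      * laguerre k (- 1 / (2 * real n + 2)) (t ^ (2*n+2) / (real n + 1))"

definition w_raw :: "nat \<Rightarrow> nat \<Rightarrow> real \<Rightarrow> real" where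
  "w_raw n k t = exp (- (t ^ (2*n+2)) / (2 * real n + 2)) * t
      * laguerre k (1 / (2 * real n + 2)) (t ^ (2*n+2) / (real n + 1))"

definition c_const :: "nat \<Rightarrow> nat \<Rightarrow> real" where
  "c_const n k = 1 / sqrt (integral\<^sup>L lborel (\<lambda>t. (t ^ n * v_raw n k t)\<^sup>2))"

definition d_const :: "nat \<Rightarrow> nat \<Rightarrow> real" where
  "d_const n k = 1 / sqrt (integral\<^sup>L lborel (\<lambda>t. (t ^ n * w_raw n k t)\<^sup>2))"

definition v_fun :: "nat \<Rightarrow> nat \<Rightarrow> real \<Rightarrow> real" where
  "v_fun n k t = c_const n k * v_raw n k t"

definition w_fun :: "nat \<Rightarrow> nat \<Rightarrow> real \<Rightarrow> real" where
  "w_fun n k t = d_const n k * w_raw n k t"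

definition E_val :: "nat \<Rightarrow> nat \<Rightarrow> real" where
  "E_val n k = 4 * real k * (real n + 1) + 2 * real n + 1"

end

theory Submission
  imports Defs "HOL-Probability.Sinc_Integral" "HOL-Real_Asymp.Real_Asymp"
begin

(* Before normalization, v_k and w_k solve u'' = (t^(4n+2) - E t^(2n)) u, with E = E_k for v_k and
   E = E_k + 2 for w_k: this is Laguerre's equation x L'' + (a + 1 - x) L' + k L = 0 in the variable
   x = t^(2n+2)/(n+1).  The factor exp(-t^(2n+2)/(2n+2)) makes u and u' decay faster than any power.

   For such u let M_a = int t^a u^2 and q = t^(4n+2) - E t^(2n).  Integrating the exact derivatives
   of u u' and of t^(4n+2) u u' - (2n+1) t^(4n+1) u^2 over the line gives
     int u'^2 + M_(4n+2) = E M_(2n),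
     int t^(4n+2) u'^2 + M_(8n+4) - E M_(6n+2) = (2n+1)(4n+1) M_(4n),
   so int u'^2 <= E M_(2n), M_(4n) <= M_(2n) + M_(4n+2) <= (1 + E) M_(2n) and
   int (q u)^2 = M_(8n+4) - 2E M_(6n+2) + E^2 M_(4n) <= ((2n+1)(4n+1) + E^2) M_(4n).
   Since u'^2 vanishes at -infinity, u'(t)^2 <= int |2 u' q u| <= int u'^2 + int (q u)^2 = O(E^3) M_(2n),
   and M_(2n) is the square of the normalizing norm.  Hence the derivatives of the normalized functions
   are O(E_k^(3/2)), which is stronger than the bound claimed. *)

section \<open>Rapidly decreasing functions\<close>

definition polynomially_bounded :: "(real \<Rightarrow> real) \<Rightarrow> bool" where
  "polynomially_bounded p \<longleftrightarrow> (\<exists>C N. \<forall>t. \<bar>p t\<bar> \<le> C * (1 + t\<^sup>2) ^ N)"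

definition rapidly_decreasing :: "(real \<Rightarrow> real) \<Rightarrow> bool" where
  "rapidly_decreasing f \<longleftrightarrow> (\<forall>N. \<exists>C. \<forall>t. \<bar>f t\<bar> * (1 + t\<^sup>2) ^ N \<le> C)"

lemma polynomially_boundedE:
  assumes "polynomially_bounded p"
  obtains C N where "C \<ge> 0" "\<And>t. \<bar>p t\<bar> \<le> C * (1 + t\<^sup>2) ^ N"
proof -
  obtain C N where C: "\<And>t. \<bar>p t\<bar> \<le> C * (1 + t\<^sup>2) ^ N"
    using assms unfolding polynomially_bounded_def by blast
  have "0 \<le> C"
    using order_trans[OF abs_ge_zero C[of 0]] by simp
  from this C show thesis by (rule that)
qed

lemma polynomially_bounded_const: "polynomially_bounded (\<lambda>t. c)"
  unfolding polynomially_bounded_def by (rule exI[of _ "\<bar>c\<bar>"], rule exI[of _ 0]) simp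

lemma polynomially_bounded_ident: "polynomially_bounded (\<lambda>t. t)"
proof -
  have "\<bar>t\<bar> \<le> 1 * (1 + t\<^sup>2) ^ 1" for t :: real
    using zero_le_power2[of "\<bar>t\<bar> - 1"] by (simp add: power2_diff)
  then show ?thesis unfolding polynomially_bounded_def by blast
qed

lemma polynomially_bounded_mult:
  assumes "polynomially_bounded p" "polynomially_bounded q"
  shows "polynomially_bounded (\<lambda>t. p t * q t)"
proof -
  obtain C N where "C \<ge> 0" and C: "\<And>t. \<bar>p t\<bar> \<le> C * (1 + t\<^sup>2) ^ N"
    using assms(1) by (rule polynomially_boundedE) (rule that)
  obtain D M where "D \<ge> 0" and D: "\<And>t. \<bar>q t\<bar> \<le> D * (1 + t\<^sup>2) ^ M"
    using assms(2) by (rule polynomially_boundedE) (rule that)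
  have "\<bar>p t * q t\<bar> \<le> (C * D) * (1 + t\<^sup>2) ^ (N + M)" for t
  proof -
    have "\<bar>p t * q t\<bar> \<le> (C * (1 + t\<^sup>2) ^ N) * (D * (1 + t\<^sup>2) ^ M)"
      unfolding abs_mult using \<open>C \<ge> 0\<close> by (intro mult_mono C D) auto
    then show ?thesis by (simp add: power_add algebra_simps)
  qed
  then show ?thesis unfolding polynomially_bounded_def by blast
qed

lemma polynomially_bounded_add:
  assumes "polynomially_bounded p" "polynomially_bounded q"
  shows "polynomially_bounded (\<lambda>t. p t + q t)"
proof -
  obtain C N where "C \<ge> 0" and C: "\<And>t. \<bar>p t\<bar> \<le> C * (1 + t\<^sup>2) ^ N"
    using assms(1) by (rule polynomially_boundedE) (rule that)
  obtain D M where "D \<ge> 0" and D: "\<And>t. \<bar>q t\<bar> \<le> D * (1 + t\<^sup>2) ^ M"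
    using assms(2) by (rule polynomially_boundedE) (rule that)
  have "\<bar>p t + q t\<bar> \<le> (C + D) * (1 + t\<^sup>2) ^ (N + M)" for t
  proof -
    have mono: "(1 + t\<^sup>2) ^ a \<le> (1 + t\<^sup>2) ^ (N + M)" if "a \<le> N + M" for a
      using that by (intro power_increasing) auto
    have "\<bar>p t + q t\<bar> \<le> C * (1 + t\<^sup>2) ^ N + D * (1 + t\<^sup>2) ^ M"
      using C[of t] D[of t] by linarith
    also have "\<dots> \<le> C * (1 + t\<^sup>2) ^ (N + M) + D * (1 + t\<^sup>2) ^ (N + M)"
      using \<open>C \<ge> 0\<close> \<open>D \<ge> 0\<close> by (intro add_mono mult_left_mono mono) auto
    finally show ?thesis by (simp add: algebra_simps)
  qed
  then show ?thesis unfolding polynomially_bounded_def by blast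
qed

lemma polynomially_bounded_diff:
  assumes "polynomially_bounded p" "polynomially_bounded q"
  shows "polynomially_bounded (\<lambda>t. p t - q t)"
  using polynomially_bounded_add[OF assms(1) polynomially_bounded_mult[OF polynomially_bounded_const assms(2)],
      of "-1"]
  by simp

lemma polynomially_bounded_power: "polynomially_bounded p \<Longrightarrow> polynomially_bounded (\<lambda>t. p t ^ k)"
  by (induction k) (auto intro: polynomially_bounded_const polynomially_bounded_mult)

lemma polynomially_bounded_polynomial:
  fixes k :: nat
  assumes "polynomially_bounded p"
  shows "polynomially_bounded (\<lambda>t. \<Sum>i\<le>k. c i * p t ^ d i)"
proof (induction k)
  case (Suc k)
  then show ?case
    by (simp, intro polynomially_bounded_add polynomially_bounded_mult
        polynomially_bounded_const polynomially_bounded_power assms)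
qed (simp, intro polynomially_bounded_mult polynomially_bounded_const polynomially_bounded_power assms)

lemma rapidly_decreasing_mult_polynomially_bounded:
  assumes "polynomially_bounded p" "rapidly_decreasing f"
  shows "rapidly_decreasing (\<lambda>t. p t * f t)"
  unfolding rapidly_decreasing_def
proof
  fix N
  obtain C M where "C \<ge> 0" and C: "\<And>t. \<bar>p t\<bar> \<le> C * (1 + t\<^sup>2) ^ M"
    using assms(1) by (rule polynomially_boundedE) (rule that)
  obtain D where D: "\<And>t. \<bar>f t\<bar> * (1 + t\<^sup>2) ^ (N + M) \<le> D"
    using assms(2) unfolding rapidly_decreasing_def by blast
  have "\<bar>p t * f t\<bar> * (1 + t\<^sup>2) ^ N \<le> C * D" for t
  proof -
    have "\<bar>p t * f t\<bar> * (1 + t\<^sup>2) ^ N = \<bar>p t\<bar> * (\<bar>f t\<bar> * (1 + t\<^sup>2) ^ N)"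
      by (simp add: abs_mult)
    also have "\<dots> \<le> (C * (1 + t\<^sup>2) ^ M) * (\<bar>f t\<bar> * (1 + t\<^sup>2) ^ N)"
      by (intro mult_right_mono C) auto
    also have "\<dots> = C * (\<bar>f t\<bar> * (1 + t\<^sup>2) ^ (N + M))"
      by (simp add: power_add algebra_simps)
    also have "\<dots> \<le> C * D"
      using \<open>C \<ge> 0\<close> by (intro mult_left_mono D)
    finally show ?thesis .
  qed
  then show "\<exists>C. \<forall>t. \<bar>p t * f t\<bar> * (1 + t\<^sup>2) ^ N \<le> C" by blast
qed

lemma rapidly_decreasing_imp_polynomially_bounded:
  "rapidly_decreasing f \<Longrightarrow> polynomially_bounded f"
  unfolding rapidly_decreasing_def polynomially_bounded_def by (metis mult_1 mult_1_right power_0)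

lemma rapidly_decreasing_mult:
  "rapidly_decreasing f \<Longrightarrow> rapidly_decreasing g \<Longrightarrow> rapidly_decreasing (\<lambda>t. f t * g t)"
  by (intro rapidly_decreasing_mult_polynomially_bounded rapidly_decreasing_imp_polynomially_bounded)

lemma rapidly_decreasing_add:
  assumes "rapidly_decreasing f" "rapidly_decreasing g"
  shows "rapidly_decreasing (\<lambda>t. f t + g t)"
  unfolding rapidly_decreasing_def
proof
  fix N
  obtain C where C: "\<And>t. \<bar>f t\<bar> * (1 + t\<^sup>2) ^ N \<le> C"
    using assms(1) unfolding rapidly_decreasing_def by blast
  obtain D where D: "\<And>t. \<bar>g t\<bar> * (1 + t\<^sup>2) ^ N \<le> D"
    using assms(2) unfolding rapidly_decreasing_def by blast
  have "\<bar>f t + g t\<bar> * (1 + t\<^sup>2) ^ N \<le> C + D" for t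
  proof -
    have "\<bar>f t + g t\<bar> * (1 + t\<^sup>2) ^ N \<le> \<bar>f t\<bar> * (1 + t\<^sup>2) ^ N + \<bar>g t\<bar> * (1 + t\<^sup>2) ^ N"
      unfolding distrib_right[symmetric] by (intro mult_right_mono) auto
    then show ?thesis using C[of t] D[of t] by linarith
  qed
  then show "\<exists>C. \<forall>t. \<bar>f t + g t\<bar> * (1 + t\<^sup>2) ^ N \<le> C" by blast
qed

lemma rapidly_decreasing_diff:
  assumes "rapidly_decreasing f" "rapidly_decreasing g"
  shows "rapidly_decreasing (\<lambda>t. f t - g t)"
  using rapidly_decreasing_add[OF assms(1)
      rapidly_decreasing_mult_polynomially_bounded[OF polynomially_bounded_const assms(2), of "-1"]]
  by simp

lemmas polynomially_bounded_intros =
  polynomially_bounded_const polynomially_bounded_ident polynomially_bounded_add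
  polynomially_bounded_diff polynomially_bounded_mult polynomially_bounded_power

lemmas rapidly_decreasing_intros =
  rapidly_decreasing_mult_polynomially_bounded rapidly_decreasing_mult rapidly_decreasing_diff

lemma rapidly_decreasing_le_inverse:
  assumes "rapidly_decreasing f"
  obtains C where "\<And>t. \<bar>f t\<bar> \<le> C * inverse (1 + t\<^sup>2)"
proof -
  obtain C where C: "\<And>t. \<bar>f t\<bar> * (1 + t\<^sup>2) ^ 1 \<le> C"
    using assms unfolding rapidly_decreasing_def by blast
  have "\<bar>f t\<bar> \<le> C * inverse (1 + t\<^sup>2)" for t
    using C[of t] by (simp add: field_simps add_pos_nonneg)
  then show ?thesis using that by blast
qed

lemma rapidly_decreasing_integrable:
  assumes "rapidly_decreasing f" "continuous_on UNIV f"
  shows "integrable lborel f"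
proof -
  obtain C where C: "\<And>t. \<bar>f t\<bar> \<le> C * inverse (1 + t\<^sup>2)"
    using assms(1) by (rule rapidly_decreasing_le_inverse) (rule that)
  have "integrable lborel (\<lambda>t. inverse (1 + t\<^sup>2) :: real)"
    using integrable_inverse_1_plus_square by (simp add: set_integrable_def)
  then show ?thesis
    by (rule Bochner_Integration.integrable_bound[OF integrable_mult_right[where c = C]])
       (use assms(2) C in \<open>auto intro!: borel_measurable_continuous_onI AE_I2 order_trans[OF C abs_ge_self]\<close>)
qed

lemma rapidly_decreasing_tendsto_0:
  assumes "rapidly_decreasing f"
  shows "(f \<longlongrightarrow> 0) at_top" "(f \<longlongrightarrow> 0) at_bot"
proof -
  obtain C where C: "\<And>t. \<bar>f t\<bar> \<le> C * inverse (1 + t\<^sup>2)"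
    using assms by (rule rapidly_decreasing_le_inverse) (rule that)
  have "((\<lambda>t. C * inverse (1 + t\<^sup>2)) \<longlongrightarrow> 0) at_top"
    by real_asymp
  then show "(f \<longlongrightarrow> 0) at_top"
    by (rule tendsto_0_le[where K = 1]) (auto intro!: always_eventually order_trans[OF C abs_ge_self])
  have "((\<lambda>t. C * inverse (1 + t\<^sup>2)) \<longlongrightarrow> 0) at_bot"
    by real_asymp
  then show "(f \<longlongrightarrow> 0) at_bot"
    by (rule tendsto_0_le[where K = 1]) (auto intro!: always_eventually order_trans[OF C abs_ge_self])
qed

lemma has_bochner_integral_deriv_eq_0:
  fixes G g :: "real \<Rightarrow> real"
  assumes "has_bochner_integral lborel g I" and "\<And>t. (G has_real_derivative g t) (at t)"
    and "continuous_on UNIV g" and "rapidly_decreasing G"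
  shows "I = 0"
proof -
  have "(LBINT x=-\<infinity>..\<infinity>. g x) = 0 - 0"
    by (rule interval_integral_FTC_integrable)
       (use assms rapidly_decreasing_tendsto_0[OF assms(4)] in \<open>auto simp:
           has_real_derivative_iff_has_vector_derivative[symmetric] has_bochner_integral_iff
           set_integrable_def ereal_tendsto_simps continuous_on_eq_continuous_at\<close>)
  with assms(1) show ?thesis
    by (simp add: interval_lebesgue_integral_def set_lebesgue_integral_def has_bochner_integral_iff)
qed

lemma le_integral_abs_deriv:
  fixes G g :: "real \<Rightarrow> real"
  assumes G: "\<And>t. (G has_real_derivative g t) (at t)" and "continuous_on UNIV g"
    and g: "integrable lborel g" and "(G \<longlongrightarrow> 0) at_bot"
  shows "G t \<le> integral\<^sup>L lborel (\<lambda>t. \<bar>g t\<bar>)"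
proof -
  have "isCont G t" using G DERIV_isCont by blast
  moreover have g_below: "set_integrable lborel (einterval (-\<infinity>) (ereal t)) g"
    unfolding set_integrable_def by (rule integrable_mult_indicator) (auto simp: g)
  ultimately have "(LBINT x=-\<infinity>..ereal t. g x) = G t - 0"
    by (intro interval_integral_FTC_integrable)
       (use assms in \<open>auto simp: has_real_derivative_iff_has_vector_derivative[symmetric]
           ereal_tendsto_simps continuous_on_eq_continuous_at isCont_def filterlim_at_split\<close>)
  then have "G t = integral\<^sup>L lborel (\<lambda>x. indicator {..<t} x * g x)"
    by (simp add: interval_lebesgue_integral_def set_lebesgue_integral_def)
  also have "\<dots> \<le> integral\<^sup>L lborel (\<lambda>t. \<bar>g t\<bar>)"
    using g_below by (intro integral_mono) (auto simp: set_integrable_def g indicator_def)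
  finally show ?thesis .
qed

section \<open>Moment estimates for the anharmonic oscillator\<close>

lemma abs_inverse_sqrt_mult_le:
  fixes r B I :: real
  assumes "r\<^sup>2 \<le> B * I" "0 \<le> B"
  shows "\<bar>1 / sqrt I * r\<bar> \<le> sqrt B"
proof (cases "0 < I")
  case True
  have "(1 / sqrt I * r)\<^sup>2 = r\<^sup>2 / I"
    using True by (simp add: power_mult_distrib power_divide)
  also have "\<dots> \<le> B"
    using assms(1) True by (simp add: divide_le_eq)
  finally show ?thesis
    using real_sqrt_le_mono real_sqrt_abs by metis
next
  case False
  then have "r\<^sup>2 = 0"
    using assms mult_nonneg_nonpos[of B I] zero_le_power2[of r] by linarith
  then show ?thesis using assms(2) by simp
qed

definition sq_moment :: "(real \<Rightarrow> real) \<Rightarrow> nat \<Rightarrow> real" where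
  "sq_moment f a = integral\<^sup>L lborel (\<lambda>t. t ^ a * (f t)\<^sup>2)"

lemma sq_moment_nonneg: "even a \<Longrightarrow> 0 \<le> sq_moment f a"
  unfolding sq_moment_def by (intro integral_nonneg_AE AE_I2) (auto simp: zero_le_even_power)

lemma has_bochner_integral_sq_moment:
  assumes "rapidly_decreasing f" "continuous_on UNIV f"
  shows "has_bochner_integral lborel (\<lambda>t. t ^ a * (f t)\<^sup>2) (sq_moment f a)"
  unfolding sq_moment_def power2_eq_square
  by (intro has_bochner_integral_integrable rapidly_decreasing_integrable rapidly_decreasing_intros
      polynomially_bounded_intros assms continuous_intros)

lemma power_le_add_power:
  fixes x :: real
  assumes "0 \<le> x" "a \<le> b" "b \<le> c"
  shows "x ^ b \<le> x ^ a + x ^ c"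
proof (cases "x \<le> 1")
  case True
  then have "x ^ b \<le> x ^ a" using assms by (intro power_decreasing) auto
  then show ?thesis using zero_le_power[OF \<open>0 \<le> x\<close>, of c] by linarith
next
  case False
  then have "x ^ b \<le> x ^ c" using assms by (intro power_increasing) auto
  then show ?thesis using zero_le_power[OF \<open>0 \<le> x\<close>, of a] by linarith
qed

lemma sq_moment_le_add:
  assumes "\<And>a. integrable lborel (\<lambda>t. t ^ a * (f t)\<^sup>2)"
    and "even a" "even b" "even c" "a \<le> b" "b \<le> c"
  shows "sq_moment f b \<le> sq_moment f a + sq_moment f c"
proof -
  have "t ^ b \<le> t ^ a + t ^ c" for t :: real
  proof -
    obtain a' b' c' where "a = 2 * a'" "b = 2 * b'" "c = 2 * c'"
      using assms by (auto elim!: evenE)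
    then show ?thesis
      using power_le_add_power[of "t\<^sup>2" a' b' c'] assms by (simp add: power_mult)
  qed
  then have "integral\<^sup>L lborel (\<lambda>t. t ^ b * (f t)\<^sup>2)
      \<le> integral\<^sup>L lborel (\<lambda>t. t ^ a * (f t)\<^sup>2 + t ^ c * (f t)\<^sup>2)"
    using assms by (intro integral_mono Bochner_Integration.integrable_add)
      (auto simp: distrib_right[symmetric] mult_right_mono)
  then show ?thesis
    using assms by (simp add: sq_moment_def)
qed

locale anharmonic_solution =
  fixes n :: nat and E :: real and u u' :: "real \<Rightarrow> real"
  assumes has_deriv_u: "\<And>t. (u has_real_derivative u' t) (at t)"
    and has_deriv_u': "\<And>t. (u' has_real_derivative (t ^ (4*n+2) - E * t ^ (2*n)) * u t) (at t)"
    and rapidly_decreasing_u: "rapidly_decreasing u"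
    and rapidly_decreasing_u': "rapidly_decreasing u'"
begin

abbreviation potential :: "real \<Rightarrow> real" where
  "potential t \<equiv> t ^ (4*n+2) - E * t ^ (2*n)"

lemma continuous_u: "continuous_on UNIV u"
  using has_deriv_u DERIV_isCont continuous_at_imp_continuous_on by blast

lemma continuous_u': "continuous_on UNIV u'"
  using has_deriv_u' DERIV_isCont continuous_at_imp_continuous_on by blast

lemma has_sq_moment_u: "has_bochner_integral lborel (\<lambda>t. t ^ a * (u t)\<^sup>2) (sq_moment u a)"
  by (rule has_bochner_integral_sq_moment[OF rapidly_decreasing_u continuous_u])

lemma has_sq_moment_u': "has_bochner_integral lborel (\<lambda>t. t ^ a * (u' t)\<^sup>2) (sq_moment u' a)"
  by (rule has_bochner_integral_sq_moment[OF rapidly_decreasing_u' continuous_u'])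

lemma integrable_u: "integrable lborel (\<lambda>t. t ^ a * (u t)\<^sup>2)"
  using has_sq_moment_u by (simp add: has_bochner_integral_iff)

lemma integrable_u': "integrable lborel (\<lambda>t. t ^ a * (u' t)\<^sup>2)"
  using has_sq_moment_u' by (simp add: has_bochner_integral_iff)

lemma energy_identity: "sq_moment u' 0 + sq_moment u (4*n+2) = E * sq_moment u (2*n)"
proof -
  define g where "g t = t ^ 0 * (u' t)\<^sup>2 + t ^ (4*n+2) * (u t)\<^sup>2 - E * (t ^ (2*n) * (u t)\<^sup>2)" for t
  have "sq_moment u' 0 + sq_moment u (4*n+2) - E * sq_moment u (2*n) = 0"
  proof (rule has_bochner_integral_deriv_eq_0[where G = "\<lambda>t. u t * u' t" and g = g])
    show "has_bochner_integral lborel g (sq_moment u' 0 + sq_moment u (4*n+2) - E * sq_moment u (2*n))"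
      unfolding g_def by (intro has_bochner_integral_add has_bochner_integral_diff
          has_bochner_integral_mult_right has_sq_moment_u has_sq_moment_u')
    show "((\<lambda>t. u t * u' t) has_real_derivative g t) (at t)" for t
      unfolding g_def by (rule derivative_eq_intros has_deriv_u has_deriv_u' refl)+
        (simp add: algebra_simps power2_eq_square)
    show "continuous_on UNIV g"
      unfolding g_def using continuous_u continuous_u' by (intro continuous_intros)
    show "rapidly_decreasing (\<lambda>t. u t * u' t)"
      by (intro rapidly_decreasing_intros rapidly_decreasing_u rapidly_decreasing_u')
  qed
  then show ?thesis by simp
qed

lemma virial_identity:
  "sq_moment u' (4*n+2) + sq_moment u (8*n+4) - E * sq_moment u (6*n+2)
     = (2 * real n + 1) * (4 * real n + 1) * sq_moment u (4*n)"
proof -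
  define c where "c = (2 * real n + 1) * (4 * real n + 1)"
  define g where "g t = t ^ (4*n+2) * (u' t)\<^sup>2 + t ^ (8*n+4) * (u t)\<^sup>2 - E * (t ^ (6*n+2) * (u t)\<^sup>2)
      - c * (t ^ (4*n) * (u t)\<^sup>2)" for t
  define G where "G t = t ^ (4*n+2) * (u t * u' t) - (2 * real n + 1) * (t ^ (4*n+1) * (u t)\<^sup>2)" for t
  have "sq_moment u' (4*n+2) + sq_moment u (8*n+4) - E * sq_moment u (6*n+2) - c * sq_moment u (4*n) = 0"
  proof (rule has_bochner_integral_deriv_eq_0[where G = G and g = g])
    show "has_bochner_integral lborel g (sq_moment u' (4*n+2) + sq_moment u (8*n+4)
        - E * sq_moment u (6*n+2) - c * sq_moment u (4*n))"
      unfolding g_def by (intro has_bochner_integral_add has_bochner_integral_diff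
          has_bochner_integral_mult_right has_sq_moment_u has_sq_moment_u')
    show "(G has_real_derivative g t) (at t)" for t
    proof -
      have powers: "t ^ (8*n+4) = t ^ (4*n+2) * t ^ (4*n+2)" "t ^ (6*n+2) = t ^ (4*n+2) * t ^ (2*n)"
        unfolding power_add[symmetric] by (rule arg_cong[where f = "power t"], simp)+
      show ?thesis
        unfolding G_def[abs_def] g_def c_def
        by (rule derivative_eq_intros has_deriv_u has_deriv_u' refl)+
          (simp only: powers, simp add: algebra_simps power2_eq_square)
    qed
    show "continuous_on UNIV g"
      unfolding g_def using continuous_u continuous_u' by (intro continuous_intros)
    show "rapidly_decreasing G"
      unfolding G_def[abs_def] power2_eq_square
      by (intro rapidly_decreasing_intros polynomially_bounded_intros
          rapidly_decreasing_u rapidly_decreasing_u')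
  qed
  then show ?thesis unfolding c_def by simp
qed

lemma sq_moment_4n_le: "sq_moment u (4*n) \<le> (1 + E) * sq_moment u (2*n)"
proof -
  have "sq_moment u (4*n) \<le> sq_moment u (2*n) + sq_moment u (4*n+2)"
    by (rule sq_moment_le_add[OF integrable_u]) auto
  moreover have "sq_moment u (4*n+2) \<le> E * sq_moment u (2*n)"
    using energy_identity sq_moment_nonneg[of 0 u'] by simp
  ultimately show ?thesis by (simp add: algebra_simps)
qed

lemma integrable_potential_sq: "integrable lborel (\<lambda>t. (potential t * u t)\<^sup>2)"
  unfolding power2_eq_square using continuous_u
  by (intro rapidly_decreasing_integrable rapidly_decreasing_intros polynomially_bounded_intros
      rapidly_decreasing_u continuous_intros)

lemma integral_potential_sq_le:
  assumes "0 \<le> E"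
  shows "integral\<^sup>L lborel (\<lambda>t. (potential t * u t)\<^sup>2)
    \<le> ((2 * real n + 1) * (4 * real n + 1) + E\<^sup>2) * sq_moment u (4*n)"
proof -
  have expand: "(potential t * u t)\<^sup>2
      = t ^ (8*n+4) * (u t)\<^sup>2 - 2 * E * (t ^ (6*n+2) * (u t)\<^sup>2) + E\<^sup>2 * (t ^ (4*n) * (u t)\<^sup>2)" for t
  proof -
    have powers: "t ^ (8*n+4) = t ^ (4*n+2) * t ^ (4*n+2)" "t ^ (6*n+2) = t ^ (4*n+2) * t ^ (2*n)"
        "t ^ (4*n) = t ^ (2*n) * t ^ (2*n)"
      unfolding power_add[symmetric] by (rule arg_cong[where f = "power t"], simp)+
    show ?thesis
      by (simp only: powers) (simp add: power2_eq_square algebra_simps)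
  qed
  have "has_bochner_integral lborel (\<lambda>t. (potential t * u t)\<^sup>2)
      (sq_moment u (8*n+4) - 2 * E * sq_moment u (6*n+2) + E\<^sup>2 * sq_moment u (4*n))"
    unfolding expand by (intro has_bochner_integral_add has_bochner_integral_diff
        has_bochner_integral_mult_right has_sq_moment_u)
  then have "integral\<^sup>L lborel (\<lambda>t. (potential t * u t)\<^sup>2)
      = sq_moment u (8*n+4) - 2 * E * sq_moment u (6*n+2) + E\<^sup>2 * sq_moment u (4*n)"
    by (simp add: has_bochner_integral_iff)
  moreover have "0 \<le> E * sq_moment u (6*n+2)"
    using assms by (simp add: sq_moment_nonneg)
  ultimately show ?thesis
    using virial_identity sq_moment_nonneg[of "4*n+2" u'] by (simp add: algebra_simps)
qed

lemma deriv_sq_le: "(u' t)\<^sup>2 \<le> sq_moment u' 0 + integral\<^sup>L lborel (\<lambda>t. (potential t * u t)\<^sup>2)"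
proof -
  define g where "g t = 2 * u' t * (potential t * u t)" for t
  have "rapidly_decreasing g" "continuous_on UNIV g"
    unfolding g_def[abs_def] using continuous_u continuous_u'
    by (intro rapidly_decreasing_intros polynomially_bounded_intros
        rapidly_decreasing_u rapidly_decreasing_u' continuous_intros)+
  then have "integrable lborel g"
    by (rule rapidly_decreasing_integrable)
  have "rapidly_decreasing (\<lambda>t. (u' t)\<^sup>2)"
    unfolding power2_eq_square by (intro rapidly_decreasing_mult rapidly_decreasing_u')
  have "(u' t)\<^sup>2 \<le> integral\<^sup>L lborel (\<lambda>t. \<bar>g t\<bar>)"
  proof (rule le_integral_abs_deriv[where G = "\<lambda>t. (u' t)\<^sup>2"])
    show "((\<lambda>t. (u' t)\<^sup>2) has_real_derivative g t) (at t)" for t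
      unfolding g_def by (rule derivative_eq_intros has_deriv_u' refl)+ simp
  qed (use \<open>continuous_on UNIV g\<close> \<open>integrable lborel g\<close>
      rapidly_decreasing_tendsto_0[OF \<open>rapidly_decreasing (\<lambda>t. (u' t)\<^sup>2)\<close>] in auto)
  also have "\<dots> \<le> integral\<^sup>L lborel (\<lambda>t. t ^ 0 * (u' t)\<^sup>2 + (potential t * u t)\<^sup>2)"
  proof (rule integral_mono)
    show "\<bar>g t\<bar> \<le> t ^ 0 * (u' t)\<^sup>2 + (potential t * u t)\<^sup>2" for t
      unfolding g_def using sum_squares_bound[of "\<bar>u' t\<bar>" "\<bar>potential t * u t\<bar>"]
      by (simp add: abs_mult power_mult_distrib)
  qed (intro integrable_abs Bochner_Integration.integrable_add integrable_u' integrable_potential_sq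
      \<open>integrable lborel g\<close>)+
  also have "\<dots> = sq_moment u' 0 + integral\<^sup>L lborel (\<lambda>t. (potential t * u t)\<^sup>2)"
    unfolding sq_moment_def by (intro Bochner_Integration.integral_add integrable_u' integrable_potential_sq)
  finally show ?thesis .
qed

theorem deriv_sq_le_sq_moment:
  assumes "1 \<le> E"
  shows "(u' t)\<^sup>2 \<le> (3 + 2 * (2 * real n + 1) * (4 * real n + 1)) * E ^ 3 * sq_moment u (2*n)"
proof -
  define c where "c = (2 * real n + 1) * (4 * real n + 1)"
  define I where "I = sq_moment u (2*n)"
  have "0 \<le> I" "0 \<le> c"
    unfolding I_def c_def by (simp_all add: sq_moment_nonneg)
  have "sq_moment u' 0 \<le> E * I"
    using energy_identity sq_moment_nonneg[of "4*n+2" u] unfolding I_def by simp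
  moreover have "integral\<^sup>L lborel (\<lambda>t. (potential t * u t)\<^sup>2) \<le> (c + E\<^sup>2) * sq_moment u (4*n)"
    using integral_potential_sq_le assms unfolding c_def by simp
  moreover have "\<dots> \<le> (c + E\<^sup>2) * ((1 + E) * I)"
    using sq_moment_4n_le \<open>0 \<le> c\<close> unfolding I_def by (intro mult_left_mono) auto
  ultimately have "(u' t)\<^sup>2 \<le> (E + (c + E\<^sup>2) * (1 + E)) * I"
    using deriv_sq_le[of t] by (simp add: algebra_simps)
  also have "\<dots> \<le> (3 + 2 * c) * E ^ 3 * I"
  proof (intro mult_right_mono \<open>0 \<le> I\<close>)
    have "E \<le> E ^ 3"
      using power_increasing[of 1 3 E] assms by simp
    then have "c * (1 + E) \<le> c * (2 * E ^ 3)"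
      using assms \<open>0 \<le> c\<close> by (intro mult_left_mono) auto
    moreover have "E\<^sup>2 * (1 + E) \<le> E\<^sup>2 * (2 * E)"
      using assms by (intro mult_left_mono) auto
    ultimately show "E + (c + E\<^sup>2) * (1 + E) \<le> (3 + 2 * c) * E ^ 3"
      using \<open>E \<le> E ^ 3\<close> by (simp add: algebra_simps power2_eq_square power3_eq_cube)
  qed
  finally show ?thesis unfolding c_def I_def by (simp add: algebra_simps)
qed

lemma normalized_deriv_le:
  assumes "1 \<le> E"
  shows "\<bar>1 / sqrt (integral\<^sup>L lborel (\<lambda>t. (t ^ n * u t)\<^sup>2)) * u' t\<bar>
    \<le> sqrt ((3 + 2 * (2 * real n + 1) * (4 * real n + 1)) * E ^ 3)"
proof (rule abs_inverse_sqrt_mult_le)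
  have "integral\<^sup>L lborel (\<lambda>t. (t ^ n * u t)\<^sup>2) = sq_moment u (2*n)"
    unfolding sq_moment_def power_even_eq power_mult_distrib ..
  then show "(u' t)\<^sup>2 \<le> (3 + 2 * (2 * real n + 1) * (4 * real n + 1)) * E ^ 3
      * integral\<^sup>L lborel (\<lambda>t. (t ^ n * u t)\<^sup>2)"
    using deriv_sq_le_sq_moment[OF assms] by simp
qed (use assms in simp)

end

section \<open>Laguerre polynomials\<close>

definition laguerre_coeff :: "nat \<Rightarrow> real \<Rightarrow> nat \<Rightarrow> real" where
  "laguerre_coeff k a i = (-1) ^ i * ((real k + a) gchoose (k - i)) / fact i"

definition laguerre' :: "nat \<Rightarrow> real \<Rightarrow> real \<Rightarrow> real" where
  "laguerre' k a x = (\<Sum>i\<le>k. laguerre_coeff k a i * (real i * x ^ (i - 1)))"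

definition laguerre'' :: "nat \<Rightarrow> real \<Rightarrow> real \<Rightarrow> real" where
  "laguerre'' k a x = (\<Sum>i\<le>k. laguerre_coeff k a i * (real i * (real (i - 1) * x ^ (i - 1 - 1))))"

lemma laguerre_eq_sum_coeff: "laguerre k a x = (\<Sum>i\<le>k. laguerre_coeff k a i * x ^ i)"
  unfolding laguerre_def laguerre_coeff_def by simp

lemma has_real_derivative_laguerre: "(laguerre k a has_real_derivative laguerre' k a x) (at x)"
  unfolding laguerre_eq_sum_coeff[abs_def] laguerre'_def
  by (auto intro!: derivative_eq_intros sum.cong simp: mult_ac)

lemma has_real_derivative_laguerre': "(laguerre' k a has_real_derivative laguerre'' k a x) (at x)"
  unfolding laguerre'_def[abs_def] laguerre''_def
  by (auto intro!: derivative_eq_intros sum.cong simp: mult_ac)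

lemma laguerre_coeff_Suc:
  assumes "i < k"
  shows "real (Suc i) * (real (Suc i) + a) * laguerre_coeff k a (Suc i) = - (real k - real i) * laguerre_coeff k a i"
proof -
  obtain j where j: "k - i = Suc j" using assms by (metis Suc_diff_Suc)
  define y where "y = real k + a"
  have "k - Suc i = j" "real k - real i = real (Suc j)" "y - real j = real (Suc i) + a"
    using j assms unfolding y_def by (simp_all add: of_nat_diff)
  have "real (Suc i) * (real (Suc i) + a) * laguerre_coeff k a (Suc i)
      = - ((-1) ^ i * ((y - real j) * (y gchoose j)) / fact i)"
    unfolding laguerre_coeff_def \<open>k - Suc i = j\<close> \<open>y - real j = real (Suc i) + a\<close> y_def[symmetric]
    by (simp add: field_simps del: of_nat_Suc)
  also have "(y - real j) * (y gchoose j) = real (Suc j) * (y gchoose Suc j)"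
    using gbinomial_absorb_comp[of y j] gbinomial_absorption[of j y] by simp
  also have "- ((-1) ^ i * (real (Suc j) * (y gchoose Suc j)) / fact i) = - (real k - real i) * laguerre_coeff k a i"
    unfolding laguerre_coeff_def j \<open>real k - real i = real (Suc j)\<close> y_def by (simp add: field_simps)
  finally show ?thesis .
qed

lemma laguerre_ode: "x * laguerre'' k a x + (a + 1 - x) * laguerre' k a x + real k * laguerre k a x = 0"
proof -
  have termwise: "x * (c * (real i * (real (i - 1) * x ^ (i - 1 - 1)))) + (a + 1 - x) * (c * (real i * x ^ (i - 1)))
      + real k * (c * x ^ i) = real i * (real i + a) * c * x ^ (i - 1) + (real k - real i) * c * x ^ i" for c i
  proof (cases "i \<le> 1")
    case True
    then consider "i = 0" | "i = 1" by linarith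
    then show ?thesis by cases (simp_all add: algebra_simps)
  next
    case False
    then obtain m where "i = Suc (Suc m)"
      by (metis Suc_leI less_imp_Suc_add not_le plus_1_eq_Suc add.commute)
    then show ?thesis by (simp add: algebra_simps)
  qed
  have "x * laguerre'' k a x + (a + 1 - x) * laguerre' k a x + real k * laguerre k a x
    = (\<Sum>i\<le>k. real i * (real i + a) * laguerre_coeff k a i * x ^ (i - 1))
      + (\<Sum>i\<le>k. (real k - real i) * laguerre_coeff k a i * x ^ i)"
    unfolding laguerre''_def laguerre'_def laguerre_eq_sum_coeff sum_distrib_left sum.distrib[symmetric]
    by (rule sum.cong[OF refl termwise])
  also have "\<dots> = 0"
  proof (cases k)
    case (Suc m)
    have "(\<Sum>i\<le>k. real i * (real i + a) * laguerre_coeff k a i * x ^ (i - 1))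
        = (\<Sum>j\<le>m. real (Suc j) * (real (Suc j) + a) * laguerre_coeff k a (Suc j) * x ^ j)"
      unfolding Suc sum.atMost_Suc_shift by simp
    also have "\<dots> = - (\<Sum>j\<le>m. (real k - real j) * laguerre_coeff k a j * x ^ j)"
      unfolding sum_negf[symmetric]
    proof (intro sum.cong refl)
      fix j assume "j \<in> {..m}"
      then have "j < k" using Suc by simp
      then show "real (Suc j) * (real (Suc j) + a) * laguerre_coeff k a (Suc j) * x ^ j
          = - ((real k - real j) * laguerre_coeff k a j * x ^ j)"
        by (subst laguerre_coeff_Suc) (simp_all add: algebra_simps)
    qed
    also have "(\<Sum>j\<le>m. (real k - real j) * laguerre_coeff k a j * x ^ j)
        = (\<Sum>i\<le>k. (real k - real i) * laguerre_coeff k a i * x ^ i)"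
      unfolding Suc sum.atMost_Suc by simp
    finally show ?thesis by simp
  qed simp
  finally show ?thesis .
qed

section \<open>The functions v_k and w_k\<close>

definition decay_factor :: "nat \<Rightarrow> real \<Rightarrow> real" where
  "decay_factor n t = exp (- (t ^ (2*n+2)) / (2 * real n + 2))"

definition laguerre_arg :: "nat \<Rightarrow> real \<Rightarrow> real" where
  "laguerre_arg n t = t ^ (2*n+2) / (real n + 1)"

lemma has_real_derivative_decay_factor:
  "(decay_factor n has_real_derivative - (t ^ (2*n+1)) * decay_factor n t) (at t)"
proof -
  have "2 * real n + 2 > 0" "2*n+2 - Suc 0 = 2*n+1" by simp_all
  then show ?thesis
    unfolding decay_factor_def[abs_def]
    by (intro DERIV_cong[OF DERIV_chain2[OF DERIV_exp DERIV_cdivide[OF DERIV_minus[OF DERIV_pow]]]])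
      (simp add: field_simps)
qed

lemma has_real_derivative_laguerre_comp:
  "((\<lambda>t. laguerre k a (laguerre_arg n t)) has_real_derivative
      laguerre' k a (laguerre_arg n t) * (2 * t ^ (2*n+1))) (at t)"
  "((\<lambda>t. laguerre' k a (laguerre_arg n t)) has_real_derivative
      laguerre'' k a (laguerre_arg n t) * (2 * t ^ (2*n+1))) (at t)"
proof -
  have "(laguerre_arg n has_real_derivative 2 * t ^ (2*n+1)) (at t)"
  proof -
    have "real n + 1 > 0" "2*n+2 - Suc 0 = 2*n+1" by simp_all
    then show ?thesis
      unfolding laguerre_arg_def[abs_def]
      by (intro DERIV_cong[OF DERIV_cdivide[OF DERIV_pow]]) (simp add: field_simps)
  qed
  then show "((\<lambda>t. laguerre k a (laguerre_arg n t)) has_real_derivative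
      laguerre' k a (laguerre_arg n t) * (2 * t ^ (2*n+1))) (at t)"
    "((\<lambda>t. laguerre' k a (laguerre_arg n t)) has_real_derivative
      laguerre'' k a (laguerre_arg n t) * (2 * t ^ (2*n+1))) (at t)"
    by (auto intro: DERIV_chain2 has_real_derivative_laguerre has_real_derivative_laguerre')
qed

lemma power_div_fact_le_exp:
  fixes s :: real
  assumes "0 \<le> s"
  shows "s ^ N / fact N \<le> exp s"
proof -
  have "(\<lambda>n. s ^ n /\<^sub>R fact n) sums exp s" by (rule exp_converges)
  moreover have "sum (\<lambda>n. s ^ n /\<^sub>R fact n) {N} \<le> suminf (\<lambda>n. s ^ n /\<^sub>R fact n)"
    by (rule sum_le_suminf) (use calculation assms in \<open>auto simp: sums_iff\<close>)
  ultimately show ?thesis by (simp add: sums_iff divide_inverse mult.commute)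
qed

lemma square_minus_one_le_power:
  fixes t :: real
  shows "t\<^sup>2 - 1 \<le> t ^ (2*n+2)"
proof -
  have "t\<^sup>2 - 1 \<le> (t\<^sup>2) ^ (n+1)"
  proof (cases "t\<^sup>2 \<le> 1")
    case False
    then have "t\<^sup>2 \<le> (t\<^sup>2) ^ (n+1)" by (intro self_le_power) auto
    then show ?thesis by simp
  qed (smt (verit) zero_le_power zero_le_power2)
  also have "(t\<^sup>2) ^ (n+1) = t ^ (2*n+2)"
    unfolding power_mult[symmetric] by (rule arg_cong[where f = "power t"]) simp
  finally show ?thesis .
qed

lemma rapidly_decreasing_decay_factor: "rapidly_decreasing (decay_factor n)"
  unfolding rapidly_decreasing_def
proof
  fix N
  define M where "M = 2 * real n + 2"
  have "M > 0" unfolding M_def by simp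
  have "\<bar>decay_factor n t\<bar> * (1 + t\<^sup>2) ^ N \<le> exp (2 / M) * M ^ N * fact N" for t
  proof -
    define s where "s = (1 + t\<^sup>2) / M"
    have "0 \<le> s" unfolding s_def using \<open>M > 0\<close> by simp
    have "- (t ^ (2*n+2)) / M \<le> 2 / M - s"
      using square_minus_one_le_power[of t n] \<open>M > 0\<close> unfolding s_def by (simp add: field_simps)
    then have decay: "decay_factor n t \<le> exp (2 / M) * exp (- s)"
      unfolding decay_factor_def M_def[symmetric] by (simp flip: exp_add)
    have power: "s ^ N \<le> fact N * exp s"
      using power_div_fact_le_exp[OF \<open>0 \<le> s\<close>, of N] by (simp add: field_simps)
    have "\<bar>decay_factor n t\<bar> * (1 + t\<^sup>2) ^ N = decay_factor n t * (M ^ N * s ^ N)"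
      unfolding s_def using \<open>M > 0\<close> by (simp add: power_divide decay_factor_def)
    also have "\<dots> \<le> (exp (2 / M) * exp (- s)) * (M ^ N * (fact N * exp s))"
      by (rule mult_mono[OF decay mult_left_mono[OF power]])
        (use \<open>M > 0\<close> \<open>0 \<le> s\<close> in \<open>auto simp: decay_factor_def\<close>)
    also have "\<dots> = exp (2 / M) * M ^ N * fact N"
      by (simp add: exp_minus field_simps)
    finally show ?thesis .
  qed
  then show "\<exists>C. \<forall>t. \<bar>decay_factor n t\<bar> * (1 + t\<^sup>2) ^ N \<le> C" by blast
qed

lemma polynomially_bounded_laguerre_comp:
  "polynomially_bounded (\<lambda>t. laguerre k a (laguerre_arg n t))"
  "polynomially_bounded (\<lambda>t. laguerre' k a (laguerre_arg n t))"
proof -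
  have arg: "polynomially_bounded (laguerre_arg n)"
    unfolding laguerre_arg_def[abs_def] divide_inverse mult.commute[of _ "inverse _"]
    by (intro polynomially_bounded_intros)
  show "polynomially_bounded (\<lambda>t. laguerre k a (laguerre_arg n t))"
    unfolding laguerre_eq_sum_coeff by (rule polynomially_bounded_polynomial[OF arg])
  show "polynomially_bounded (\<lambda>t. laguerre' k a (laguerre_arg n t))"
    unfolding laguerre'_def mult.assoc[symmetric]
    by (rule polynomially_bounded_polynomial[OF arg])
qed

definition v_raw' :: "nat \<Rightarrow> nat \<Rightarrow> real \<Rightarrow> real" where
  "v_raw' n k t = decay_factor n t * t ^ (2*n+1) * (2 * laguerre' k (- 1 / (2 * real n + 2)) (laguerre_arg n t)
      - laguerre k (- 1 / (2 * real n + 2)) (laguerre_arg n t))"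

definition w_raw' :: "nat \<Rightarrow> nat \<Rightarrow> real \<Rightarrow> real" where
  "w_raw' n k t = decay_factor n t * (laguerre k (1 / (2 * real n + 2)) (laguerre_arg n t)
      + t ^ (2*n+2) * (2 * laguerre' k (1 / (2 * real n + 2)) (laguerre_arg n t)
      - laguerre k (1 / (2 * real n + 2)) (laguerre_arg n t)))"

lemma v_raw_eq: "v_raw n k = (\<lambda>t. decay_factor n t * laguerre k (- 1 / (2 * real n + 2)) (laguerre_arg n t))"
  unfolding v_raw_def[abs_def] decay_factor_def laguerre_arg_def ..

lemma w_raw_eq: "w_raw n k = (\<lambda>t. decay_factor n t * t * laguerre k (1 / (2 * real n + 2)) (laguerre_arg n t))"
  unfolding w_raw_def[abs_def] decay_factor_def laguerre_arg_def ..

lemma has_real_derivative_v_raw: "(v_raw n k has_real_derivative v_raw' n k t) (at t)"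
  unfolding v_raw_eq v_raw'_def
  by (rule derivative_eq_intros has_real_derivative_decay_factor has_real_derivative_laguerre_comp refl)+
    (simp add: algebra_simps)

lemma has_real_derivative_w_raw: "(w_raw n k has_real_derivative w_raw' n k t) (at t)"
proof -
  have power: "t ^ (2*n+2) = t * t ^ (2*n+1)" by simp
  show ?thesis
    unfolding w_raw_eq w_raw'_def
    by (rule derivative_eq_intros has_real_derivative_decay_factor has_real_derivative_laguerre_comp refl)+
      (simp add: power algebra_simps)
qed

lemma has_real_derivative_v_raw':
  "(v_raw' n k has_real_derivative (t ^ (4*n+2) - E_val n k * t ^ (2*n)) * v_raw n k t) (at t)"
proof -
  define a where "a = - 1 / (2 * real n + 2)"
  define X where "X = laguerre_arg n t"
  define P where "P = t ^ (2*n)"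
  have powers: "t ^ (2*n+1) = t * P" "t ^ (2*n+1 - Suc 0) = P" "t ^ (4*n+2) = t * t * P * P"
      "real (2*n+1) = 2 * (real n + 1) - 1"
    unfolding P_def by (simp_all add: power_add[symmetric] mult_2[symmetric])
  have relations: "X * (real n + 1) = t * t * P" "a * (2 * (real n + 1)) = -1"
    unfolding X_def P_def a_def laguerre_arg_def by (simp_all add: field_simps power_add power2_eq_square)
  show ?thesis
    unfolding v_raw'_def[abs_def] v_raw_eq a_def[symmetric]
    by (rule derivative_eq_intros has_real_derivative_decay_factor has_real_derivative_laguerre_comp refl)+
      (use relations laguerre_ode[of X k a] in \<open>simp only: powers E_val_def X_def[symmetric] P_def[symmetric], algebra\<close>)
qed

lemma has_real_derivative_w_raw':
  "(w_raw' n k has_real_derivative (t ^ (4*n+2) - (E_val n k + 2) * t ^ (2*n)) * w_raw n k t) (at t)"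
proof -
  define a where "a = 1 / (2 * real n + 2)"
  define X where "X = laguerre_arg n t"
  define P where "P = t ^ (2*n)"
  have powers: "t ^ (2*n+1) = t * P" "t ^ (2*n+1 - Suc 0) = P" "t ^ (4*n+2) = t * t * P * P"
      "t ^ (2*n+2) = t * t * P" "t ^ (2*n+2 - Suc 0) = t * P"
      "real (2*n+1) = 2 * (real n + 1) - 1" "real (2*n+2) = 2 * (real n + 1)"
    unfolding P_def by (simp_all add: power_add[symmetric] mult_2[symmetric])
  have relations: "X * (real n + 1) = t * t * P" "a * (2 * (real n + 1)) = 1"
    unfolding X_def P_def a_def laguerre_arg_def by (simp_all add: field_simps power_add power2_eq_square)
  show ?thesis
    unfolding w_raw'_def[abs_def] w_raw_eq a_def[symmetric]
    by (rule derivative_eq_intros has_real_derivative_decay_factor has_real_derivative_laguerre_comp refl)+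
      (use relations laguerre_ode[of X k a] in \<open>simp only: powers E_val_def X_def[symmetric] P_def[symmetric], algebra\<close>)
qed

lemma rapidly_decreasing_v_raw: "rapidly_decreasing (v_raw n k)" "rapidly_decreasing (v_raw' n k)"
proof -
  have "v_raw n k = (\<lambda>t. laguerre k (- 1 / (2 * real n + 2)) (laguerre_arg n t) * decay_factor n t)"
    "v_raw' n k = (\<lambda>t. (t ^ (2*n+1) * (2 * laguerre' k (- 1 / (2 * real n + 2)) (laguerre_arg n t)
      - laguerre k (- 1 / (2 * real n + 2)) (laguerre_arg n t))) * decay_factor n t)"
    unfolding v_raw_eq v_raw'_def[abs_def] by (simp_all add: mult_ac)
  then show "rapidly_decreasing (v_raw n k)" "rapidly_decreasing (v_raw' n k)"
    by (simp_all only:) (intro rapidly_decreasing_intros polynomially_bounded_intros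
        rapidly_decreasing_decay_factor polynomially_bounded_laguerre_comp)+
qed

lemma rapidly_decreasing_w_raw: "rapidly_decreasing (w_raw n k)" "rapidly_decreasing (w_raw' n k)"
proof -
  have "w_raw n k = (\<lambda>t. (t * laguerre k (1 / (2 * real n + 2)) (laguerre_arg n t)) * decay_factor n t)"
    "w_raw' n k = (\<lambda>t. (laguerre k (1 / (2 * real n + 2)) (laguerre_arg n t)
      + t ^ (2*n+2) * (2 * laguerre' k (1 / (2 * real n + 2)) (laguerre_arg n t)
      - laguerre k (1 / (2 * real n + 2)) (laguerre_arg n t))) * decay_factor n t)"
    unfolding w_raw_eq w_raw'_def[abs_def] by (simp_all add: mult_ac)
  then show "rapidly_decreasing (w_raw n k)" "rapidly_decreasing (w_raw' n k)"
    by (simp_all only:) (intro rapidly_decreasing_intros polynomially_bounded_intros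
        rapidly_decreasing_decay_factor polynomially_bounded_laguerre_comp)+
qed

lemma anharmonic_solution_v_raw: "anharmonic_solution n (E_val n k) (v_raw n k) (v_raw' n k)"
  by unfold_locales (intro has_real_derivative_v_raw has_real_derivative_v_raw' rapidly_decreasing_v_raw)+

lemma anharmonic_solution_w_raw: "anharmonic_solution n (E_val n k + 2) (w_raw n k) (w_raw' n k)"
  by unfold_locales (intro has_real_derivative_w_raw has_real_derivative_w_raw' rapidly_decreasing_w_raw)+

lemma sqrt_cube_le_powr:
  fixes E p :: real
  assumes "1 \<le> E" "3 / 2 \<le> p"
  shows "sqrt (E ^ 3) \<le> E powr p"
proof -
  have "sqrt (E ^ 3) = (E powr 3) powr (1 / 2)"
    using assms(1) by (simp add: powr_half_sqrt powr_realpow)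
  also have "\<dots> = E powr (3 / 2)"
    by (simp add: powr_powr)
  also have "\<dots> \<le> E powr p"
    using assms by (intro powr_mono) auto
  finally show ?thesis .
qed

lemma sqrt_mult_cube_le_powr:
  fixes K E E' p :: real
  assumes "0 \<le> K" "0 \<le> E'" "E' \<le> 3 * E" "1 \<le> E" "3 / 2 \<le> p"
  shows "sqrt (K * E' ^ 3) \<le> sqrt (27 * K) * E powr p"
proof -
  have "K * E' ^ 3 \<le> K * (3 * E) ^ 3"
    using assms by (intro mult_left_mono power_mono) auto
  then have "sqrt (K * E' ^ 3) \<le> sqrt (27 * K) * sqrt (E ^ 3)"
    by (simp add: power_mult_distrib real_sqrt_mult[symmetric] mult_ac)
  also have "\<dots> \<le> sqrt (27 * K) * E powr p"
    using assms by (intro mult_left_mono sqrt_cube_le_powr) auto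
  finally show ?thesis .
qed

lemma abs_deriv_v_fun_le:
  "\<bar>deriv (v_fun n k) t\<bar> \<le> sqrt ((3 + 2 * (2 * real n + 1) * (4 * real n + 1)) * E_val n k ^ 3)"
proof -
  interpret anharmonic_solution n "E_val n k" "v_raw n k" "v_raw' n k"
    by (rule anharmonic_solution_v_raw)
  have "deriv (v_fun n k) t = c_const n k * v_raw' n k t"
    unfolding v_fun_def[abs_def] by (intro DERIV_imp_deriv DERIV_cmult has_real_derivative_v_raw)
  then show ?thesis
    unfolding c_const_def using normalized_deriv_le[of t] by (simp add: E_val_def)
qed

lemma abs_deriv_w_fun_le:
  "\<bar>deriv (w_fun n k) t\<bar> \<le> sqrt ((3 + 2 * (2 * real n + 1) * (4 * real n + 1)) * (E_val n k + 2) ^ 3)"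
proof -
  interpret anharmonic_solution n "E_val n k + 2" "w_raw n k" "w_raw' n k"
    by (rule anharmonic_solution_w_raw)
  have "deriv (w_fun n k) t = d_const n k * w_raw' n k t"
    unfolding w_fun_def[abs_def] by (intro DERIV_imp_deriv DERIV_cmult has_real_derivative_w_raw)
  then show ?thesis
    unfolding d_const_def using normalized_deriv_le[of t] by (simp add: E_val_def)
qed

theorem mainTheorem4:
  fixes n :: nat
  shows "\<exists>C1 > 0. \<forall>k::nat. \<forall>t::real.
     \<bar>deriv (v_fun n k) t\<bar> \<le> C1 * E_val n k powr (7/2 - 1 / (4 * real n + 4)) \<and>
     \<bar>deriv (w_fun n k) t\<bar> \<le> C1 * E_val n k powr (7/2 - 1 / (4 * real n + 4))"
proof -
  define K where "K = 3 + 2 * (2 * real n + 1) * (4 * real n + 1)"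
  have "0 < K" unfolding K_def by (simp add: add_pos_nonneg)
  have p: "3 / 2 \<le> 7/2 - 1 / (4 * real n + 4)" by (simp add: field_simps)
  have "\<bar>deriv (v_fun n k) t\<bar> \<le> sqrt (27 * K) * E_val n k powr (7/2 - 1 / (4 * real n + 4)) \<and>
     \<bar>deriv (w_fun n k) t\<bar> \<le> sqrt (27 * K) * E_val n k powr (7/2 - 1 / (4 * real n + 4))" for k t
  proof -
    have E: "1 \<le> E_val n k" unfolding E_val_def by simp
    show ?thesis
      using abs_deriv_v_fun_le[of n k t] abs_deriv_w_fun_le[of n k t]
        sqrt_mult_cube_le_powr[OF _ _ _ E p, of K "E_val n k"]
        sqrt_mult_cube_le_powr[OF _ _ _ E p, of K "E_val n k + 2"] \<open>0 < K\<close> E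
      unfolding K_def[symmetric] by auto
  qed
  moreover have "0 < sqrt (27 * K)" using \<open>0 < K\<close> by simp
  ultimately show ?thesis by blast
qed

end
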